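(* Fix $\alpha\in(0,1)$. For every $\rho\in[0,\infty)^{\mathcal E}$ with $f=\mu(\rho)\in\mathcal F$, and every $\pi\in\Pi$, $$\nabla_\rho W(\rho,\pi)'H(f,\pi)=\sum_{v=0}^{n-1}\alpha^v\sum_{e\in\mathcal E_v^+}\sigma_e H_e(f,\pi)\le-(1-\alpha)V(f,\pi),$$ where the gradient is computed with the convention $\frac{d}{dx}|x|=\mathrm{sgn}(x)$ for all $x$ (including $x=0$).
   Context: $\mathcal G=(\mathcal V,\mathcal E)$ is a finite directed graph with $\mathcal V=\{0,1,\dots,n\}$, containing no directed cycle, in which node $0$ is the unique node with no incoming link, node $n$ is the unique node with no outgoing link, there is a directed path from every node to $n$, and every link $(u,v)\in\mathcal E$ satisfies $u<v$. For $v\in\mathcal V$, $\mathcal E_v^-$ and $\mathcal E_v^+$ are the sets of links entering and leaving $v$. Each link $e$ has a flow-density function $\mu_e:[0,\infty)\to[0,\infty)$ that is continuously differentiable, strictly increasing, strictly concave, with $\mu_e(0)=0$ and $\mu_e'(0)<\infty$; $C_e:=\lim_{\rho\to\infty}\mu_e(\rho)\in(0,+\infty]$; $\mathcal F_v:=\prod_{e\in\mathcal E_v^+}[0,C_e)$, $\mathcal F:=\prod_{e\in\mathcal E}[0,C_e)$, $\mu(\rho):=(\mu_e(\rho_e))_e$. $\mathcal P$ is the set of directed paths from $0$ to $n$, $A$ the link-path incidence matrix ($A_{ep}=1$ iff $e\in p$), $\mathcal S(\cdot)$ denotes a probability simplex, $\Pi:=\{\pi\in\mathcal S(\mathcal P):(A\pi)_e<C_e\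 \forall e\}$, $f^\pi:=A\pi$, $\rho^\pi_e:=\mu_e^{-1}(f^\pi_e)$. For each $v\in\{0,\dots,n-1\}$ a continuously differentiable $G^v:\mathcal F_v\times\Pi\to\mathcal S(\mathcal E_v^+)$ is given such that (consistency) $(\sum_{j\in\mathcal E_v^+}f^\pi_j)\,G^v_e(f^\pi_{\mathcal E_v^+},\pi)=f^\pi_e$ for all $\pi\in\Pi$, $e\in\mathcal E_v^+$; and (cooperativity) $\partial G^v_j(f_{\mathcal E_v^+},\pi)/\partial f_e\ge0$ for all $\pi\in\Pi$, $f_{\mathcal E_v^+}\in\mathcal F_v$, $j\neq e\in\mathcal E_v^+$. For $f\in\mathcal F$, $\pi\in\Pi$, $e\in\mathcal E_v^+$: $H_e(f,\pi):=G^v_e(f_{\mathcal E_v^+},\pi)-f_e$ if $v=0$, and $H_e(f,\pi):=(\sum_{j\in\mathcal E_v^-}f_j)G^v_e(f_{\mathcal E_v^+},\pi)-f_e$ if $1\le v<n$. Notation: $\sigma_e:=\mathrm{sgn}(f_e-f^\pi_e)=\mathrm{sgn}(\rho_e-\rho^\pi_e)$ ($\mathrm{sgn}(0)=0$); $V(f,\pi):=\sum_{v=0}^{n-1}\alpha^v\sum_{e\in\mathcal E_v^+}|f_e-f^\pi_e|$; $W(\rho,\pi):=\sum_{v=0}^{n-1}\alpha^v\sum_{e\in\mathcal E_v^+}|\rho_e-\rho^\pi_e|$. *)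

theory Defs
  imports "HOL-Analysis.Analysis"
begin

(* Graph: nodes {0..n}, links are pairs (u,v) :: nat \<times> nat. *)

definition out_edges :: "(nat \<times> nat) set \<Rightarrow> nat \<Rightarrow> (nat \<times> nat) set" where
  "out_edges E v = {e \<in> E. fst e = v}"

definition in_edges :: "(nat \<times> nat) set \<Rightarrow> nat \<Rightarrow> (nat \<times> nat) set" where
  "in_edges E v = {e \<in> E. snd e = v}"

definition is_dpath :: "(nat \<times> nat) set \<Rightarrow> nat \<Rightarrow> (nat \<times> nat) list \<Rightarrow> bool" where
  "is_dpath E n p \<longleftrightarrow> p \<noteq> [] \<and> set p \<subseteq> E \<and> fst (hd p) = 0 \<and> snd (last p) = n \<and>
     (\<forall>i. Suc i < length p \<longrightarrow> snd (p ! i) = fst (p ! Suc i))"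

definition paths :: "(nat \<times> nat) set \<Rightarrow> nat \<Rightarrow> (nat \<times> nat) list set" where
  "paths E n = {p. is_dpath E n p}"

definition flow_of :: "(nat \<times> nat) set \<Rightarrow> nat \<Rightarrow> ((nat \<times> nat) list \<Rightarrow> real) \<Rightarrow> nat \<times> nat \<Rightarrow> real" where
  "flow_of E n \<pi> e = (\<Sum>p\<in>paths E n. if e \<in> set p then \<pi> p else 0)"

definition Pi_set :: "(nat \<times> nat) set \<Rightarrow> nat \<Rightarrow> (nat \<times> nat \<Rightarrow> ereal) \<Rightarrow> ((nat \<times> nat) list \<Rightarrow> real) set" where
  "Pi_set E n C = {\<pi>. (\<forall>p. 0 \<le> \<pi> p) \<and> (\<forall>p. p \<notin> paths E n \<longrightarrow> \<pi> p = 0) \<and>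
      sum \<pi> (paths E n) = 1 \<and> (\<forall>e\<in>E. ereal (flow_of E n \<pi> e) < C e)}"

definition Fv :: "(nat \<times> nat) set \<Rightarrow> (nat \<times> nat \<Rightarrow> ereal) \<Rightarrow> nat \<Rightarrow> (nat \<times> nat \<Rightarrow> real) set" where
  "Fv E C v = {f. (\<forall>e\<in>out_edges E v. 0 \<le> f e \<and> ereal (f e) < C e) \<and>
                  (\<forall>e. e \<notin> out_edges E v \<longrightarrow> f e = 0)}"

definition Fall :: "(nat \<times> nat) set \<Rightarrow> (nat \<times> nat \<Rightarrow> ereal) \<Rightarrow> (nat \<times> nat \<Rightarrow> real) set" where
  "Fall E C = {f. \<forall>e\<in>E. 0 \<le> f e \<and> ereal (f e) < C e}"

definition restr :: "(nat \<times> nat) set \<Rightarrow> nat \<Rightarrow> (nat \<times> nat \<Rightarrow> real) \<Rightarrow> nat \<times> nat \<Rightarrow> real" where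
  "restr E v f = (\<lambda>e. if e \<in> out_edges E v then f e else 0)"

definition Hfun :: "(nat \<times> nat) set
   \<Rightarrow> (nat \<Rightarrow> (nat \<times> nat \<Rightarrow> real) \<Rightarrow> ((nat \<times> nat) list \<Rightarrow> real) \<Rightarrow> nat \<times> nat \<Rightarrow> real)
   \<Rightarrow> (nat \<times> nat \<Rightarrow> real) \<Rightarrow> ((nat \<times> nat) list \<Rightarrow> real) \<Rightarrow> nat \<times> nat \<Rightarrow> real" where
  "Hfun E G f \<pi> e = (let v = fst e in
     if v = 0 then G v (restr E v f) \<pi> e - f e
     else (\<Sum>j\<in>in_edges E v. f j) * G v (restr E v f) \<pi> e - f e)"

definition rho_pi :: "(nat \<times> nat) set \<Rightarrow> nat \<Rightarrow> (nat \<times> nat \<Rightarrow> real \<Rightarrow> real)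
   \<Rightarrow> ((nat \<times> nat) list \<Rightarrow> real) \<Rightarrow> nat \<times> nat \<Rightarrow> real" where
  "rho_pi E n \<mu> \<pi> e = the_inv_into {0..} (\<mu> e) (flow_of E n \<pi> e)"

definition sigma :: "(nat \<times> nat) set \<Rightarrow> nat \<Rightarrow> (nat \<times> nat \<Rightarrow> real \<Rightarrow> real)
   \<Rightarrow> (nat \<times> nat \<Rightarrow> real) \<Rightarrow> ((nat \<times> nat) list \<Rightarrow> real) \<Rightarrow> nat \<times> nat \<Rightarrow> real" where
  "sigma E n \<mu> \<rho> \<pi> e = sgn (\<rho> e - rho_pi E n \<mu> \<pi> e)"

definition Vfun :: "real \<Rightarrow> (nat \<times> nat) set \<Rightarrow> nat \<Rightarrow> (nat \<times> nat \<Rightarrow> real)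
   \<Rightarrow> ((nat \<times> nat) list \<Rightarrow> real) \<Rightarrow> real" where
  "Vfun \<alpha> E n f \<pi> = (\<Sum>v<n. \<alpha> ^ v * (\<Sum>e\<in>out_edges E v. \<bar>f e - flow_of E n \<pi> e\<bar>))"

definition Wfun :: "real \<Rightarrow> (nat \<times> nat) set \<Rightarrow> nat \<Rightarrow> (nat \<times> nat \<Rightarrow> real \<Rightarrow> real)
   \<Rightarrow> (nat \<times> nat \<Rightarrow> real) \<Rightarrow> ((nat \<times> nat) list \<Rightarrow> real) \<Rightarrow> real" where
  "Wfun \<alpha> E n \<mu> \<rho> \<pi> = (\<Sum>v<n. \<alpha> ^ v * (\<Sum>e\<in>out_edges E v. \<bar>\<rho> e - rho_pi E n \<mu> \<pi> e\<bar>))"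

(* Component e (with tail v) of grad_rho W(rho,pi), computed with the convention
   d/dx |x| = sgn x for all x: the only term of W depending on rho_e is
   alpha^v |rho_e - rho^pi_e|. *)
definition Wgrad :: "real \<Rightarrow> (nat \<times> nat) set \<Rightarrow> nat \<Rightarrow> (nat \<times> nat \<Rightarrow> real \<Rightarrow> real)
   \<Rightarrow> (nat \<times> nat \<Rightarrow> real) \<Rightarrow> ((nat \<times> nat) list \<Rightarrow> real) \<Rightarrow> nat \<times> nat \<Rightarrow> real" where
  "Wgrad \<alpha> E n \<mu> \<rho> \<pi> e = \<alpha> ^ (fst e) * sgn (\<rho> e - rho_pi E n \<mu> \<pi> e)"

end

theory Submission
  imports Defs
begin

text \<open>
  Write f = mu(rho) and fp = f^pi.  Since each mu_e is strictly increasing with mu_e(0) = 0,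
  sigma_e = sgn(rho_e - rho^pi_e) = sgn(f_e - fp_e); grouping the links of E by their tails
  turns the gradient pairing into the node-wise weighted sum, which is the first claim.
  For the inequality we bound, at every node v < n, the term sum_{e out of v} sigma_e H_e by
  (inflow mismatch at v) - sum_{e out of v} |f_e - fp_e|.  This uses three ingredients:
  cooperativity of G^v makes the total routing share of the links where f exceeds fp
  (resp. falls below fp) antitone (resp. monotone) in f, consistency identifies fp out of v
  as (inflow of fp) times G^v(fp), and conservation of the path flow fp at inner nodes.
  Multiplying by alpha^v and summing, every link mismatch |f_e - fp_e| appears as inflow
  mismatch at its head only, with weight at most alpha^(tail+1); this yields the bound
  -(1 - alpha) V.
\<close>

lemma nondecreasing_of_nonneg_derivative:
  fixes \<psi> :: "real \<Rightarrow> real"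
  assumes interval: "\<And>x y z. x \<in> I \<Longrightarrow> z \<in> I \<Longrightarrow> x \<le> y \<Longrightarrow> y \<le> z \<Longrightarrow> y \<in> I"
    and deriv: "\<And>x. x \<in> I \<Longrightarrow> \<exists>D\<ge>0. (\<psi> has_real_derivative D) (at x within I)"
    and lo: "lo \<in> I" and hi: "hi \<in> I" and le: "lo \<le> hi"
  shows "\<psi> lo \<le> \<psi> hi"
proof -
  have sub: "{lo..hi} \<subseteq> I"
    using interval[OF lo hi] by auto
  have "continuous (at x within I) \<psi>" if "x \<in> I" for x
    using deriv[OF that] DERIV_continuous by blast
  then have "continuous_on I \<psi>" by (simp add: continuous_on_eq_continuous_within)
  then have cont: "continuous_on {lo..hi} \<psi>" using sub by (rule continuous_on_subset)
  show ?thesis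
  proof (rule DERIV_nonneg_imp_increasing_open[OF le _ cont])
    fix x assume x: "lo < x" "x < hi"
    then have "x \<in> I" using sub by auto
    then obtain D where D: "D \<ge> 0" "(\<psi> has_real_derivative D) (at x within I)"
      using deriv by blast
    have "(\<psi> has_real_derivative D) (at x within {lo<..<hi})"
      by (rule DERIV_subset[OF D(2)]) (use sub in auto)
    then have "DERIV \<psi> x :> D" using at_within_open[of x "{lo<..<hi}"] x by simp
    then show "\<exists>y. DERIV \<psi> x :> y \<and> y \<ge> 0" using D(1) by blast
  qed
qed

lemma nonneg_derivative_sum:
  fixes \<Gamma> :: "'e \<Rightarrow> real \<Rightarrow> real"
  assumes "\<And>j. j \<in> K \<Longrightarrow> \<exists>D\<ge>0. (\<Gamma> j has_real_derivative D) F"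
  shows "\<exists>D\<ge>0. ((\<lambda>x. \<Sum>j\<in>K. \<Gamma> j x) has_real_derivative D) F"
proof -
  obtain Df where Df: "\<forall>j\<in>K. 0 \<le> Df j \<and> (\<Gamma> j has_real_derivative Df j) F"
    using bchoice[of K "\<lambda>j D. 0 \<le> D \<and> (\<Gamma> j has_real_derivative D) F"] assms by blast
  have "((\<lambda>x. \<Sum>j\<in>K. \<Gamma> j x) has_real_derivative sum Df K) F"
    by (rule DERIV_sum) (use Df in auto)
  moreover have "sum Df K \<ge> 0" using Df by (simp add: sum_nonneg)
  ultimately show ?thesis by blast
qed

text \<open>
  Raising a coordinate
  e \<notin> J raises the mass on J; raising e \<in> J raises the mass off J, hence lowers it on J.
\<close>

lemma cooperative_mass_antitone:
  fixes \<Gamma> :: "'e \<Rightarrow> ('e \<Rightarrow> real) \<Rightarrow> real"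
  assumes finO: "finite Ou"
    and F_char: "\<And>h. h \<in> F \<longleftrightarrow> (\<forall>e\<in>Ou. h e \<in> I e) \<and> (\<forall>e. e \<notin> Ou \<longrightarrow> h e = 0)"
    and interval: "\<And>e x y z. x \<in> I e \<Longrightarrow> z \<in> I e \<Longrightarrow> x \<le> y \<Longrightarrow> y \<le> z \<Longrightarrow> y \<in> I e"
    and simplex: "\<And>h. h \<in> F \<Longrightarrow> (\<Sum>j\<in>Ou. \<Gamma> j h) = 1"
    and coop: "\<And>h j e. h \<in> F \<Longrightarrow> j \<in> Ou \<Longrightarrow> e \<in> Ou \<Longrightarrow> j \<noteq> e \<Longrightarrow>
       \<exists>D\<ge>0. ((\<lambda>x. \<Gamma> j (h(e := x))) has_real_derivative D) (at (h e) within I e)"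
    and JO: "J \<subseteq> Ou"
    and aF: "a \<in> F" and bF: "b \<in> F"
    and up: "\<forall>e\<in>J. a e \<le> b e" and down: "\<forall>e\<in>Ou - J. b e \<le> a e"
  shows "(\<Sum>j\<in>J. \<Gamma> j b) \<le> (\<Sum>j\<in>J. \<Gamma> j a)"
proof -
  have mass_mono: "(\<Sum>j\<in>K. \<Gamma> j (c(e := lo))) \<le> (\<Sum>j\<in>K. \<Gamma> j (c(e := hi)))"
    if cF: "c \<in> F" and eO: "e \<in> Ou" and KO: "K \<subseteq> Ou" and eK: "e \<notin> K"
      and lo: "lo \<in> I e" and hi: "hi \<in> I e" and le: "lo \<le> hi" for c e K lo hi
  proof (rule nondecreasing_of_nonneg_derivative[OF interval _ lo hi le])
    fix x assume x: "x \<in> I e"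
    have "c(e := x) \<in> F" using cF x eO unfolding F_char by auto
    then show "\<exists>D\<ge>0. ((\<lambda>x. \<Sum>j\<in>K. \<Gamma> j (c(e := x))) has_real_derivative D) (at x within I e)"
      using coop[of "c(e := x)" _ e] eO KO eK
      by (intro nonneg_derivative_sum) (auto simp: subset_iff)
  qed
  have mass_J: "(\<Sum>j\<in>J. \<Gamma> j h) = 1 - (\<Sum>j\<in>Ou - J. \<Gamma> j h)" if "h \<in> F" for h
    using simplex[OF that] sum.subset_diff[OF JO finO, of "\<lambda>j. \<Gamma> j h"] by simp
  have single: "(\<Sum>j\<in>J. \<Gamma> j (c(e := y))) \<le> (\<Sum>j\<in>J. \<Gamma> j c)"
    if cF: "c \<in> F" and eO: "e \<in> Ou" and y: "y \<in> I e"
      and inJ: "e \<in> J \<longrightarrow> c e \<le> y" and outJ: "e \<notin> J \<longrightarrow> y \<le> c e" for c e y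
  proof -
    have ce: "c e \<in> I e" and cyF: "c(e := y) \<in> F" using cF eO y unfolding F_char by auto
    show ?thesis
    proof (cases "e \<in> J")
      case False
      then show ?thesis
        using mass_mono[OF cF eO JO False y ce] outJ by simp
    next
      case True
      then have "(\<Sum>j\<in>Ou - J. \<Gamma> j (c(e := c e))) \<le> (\<Sum>j\<in>Ou - J. \<Gamma> j (c(e := y)))"
        using mass_mono[OF cF eO _ _ ce y] inJ by auto
      then show ?thesis using mass_J[OF cyF] mass_J[OF cF] by simp
    qed
  qed
  \<comment> \<open>Move the coordinates from a to b one at a time, by induction on the set where they differ.\<close>
  have "\<forall>b. b \<in> F \<longrightarrow> (\<forall>e\<in>J. a e \<le> b e) \<longrightarrow> (\<forall>e\<in>Ou - J. b e \<le> a e) \<longrightarrow>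
      {e. a e \<noteq> b e} \<subseteq> S \<longrightarrow> (\<Sum>j\<in>J. \<Gamma> j b) \<le> (\<Sum>j\<in>J. \<Gamma> j a)" if "finite S" for S
    using that
  proof (induction S rule: finite_induct)
    case empty
    show ?case by auto
  next
    case (insert e S)
    show ?case
    proof (intro allI impI)
      fix b assume bF: "b \<in> F" and b_up: "\<forall>e\<in>J. a e \<le> b e" and b_down: "\<forall>e\<in>Ou - J. b e \<le> a e"
        and diff: "{e. a e \<noteq> b e} \<subseteq> insert e S"
      show "(\<Sum>j\<in>J. \<Gamma> j b) \<le> (\<Sum>j\<in>J. \<Gamma> j a)"
      proof (cases "a e = b e")
        case True
        then show ?thesis using insert.IH bF b_up b_down diff by blast
      next
        case False
        then have eO: "e \<in> Ou" using aF bF unfolding F_char by metis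
        define c where "c = b(e := a e)"
        have cF: "c \<in> F" using bF aF eO unfolding F_char c_def by auto
        have "\<forall>e\<in>J. a e \<le> c e" "\<forall>e\<in>Ou - J. c e \<le> a e" "{e. a e \<noteq> c e} \<subseteq> S"
          using b_up b_down diff unfolding c_def by auto
        then have "(\<Sum>j\<in>J. \<Gamma> j c) \<le> (\<Sum>j\<in>J. \<Gamma> j a)"
          using insert.IH cF by blast
        moreover have "(\<Sum>j\<in>J. \<Gamma> j (c(e := b e))) \<le> (\<Sum>j\<in>J. \<Gamma> j c)"
          by (rule single[OF cF eO]) (use bF eO b_up b_down in \<open>auto simp: c_def F_char\<close>)
        moreover have "c(e := b e) = b" unfolding c_def by auto
        ultimately show ?thesis by simp
      qed
    qed
  qed
  moreover have "{e. a e \<noteq> b e} \<subseteq> Ou" using aF bF unfolding F_char by (smt (verit) mem_Collect_eq subsetI)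
  ultimately show ?thesis using finO bF up down by blast
qed

lemma node_sign_inequality:
  fixes g gp f fp :: "'e \<Rightarrow> real"
  assumes finO: "finite Ou" and lam: "lam \<ge> 0"
    and gp_nonneg: "\<forall>e\<in>Ou. 0 \<le> gp e" and gp_sum: "sum gp Ou = 1"
    and share_up: "(\<Sum>e\<in>{e\<in>Ou. fp e < f e}. g e) \<le> (\<Sum>e\<in>{e\<in>Ou. fp e < f e}. gp e)"
    and share_down: "(\<Sum>e\<in>{e\<in>Ou. f e < fp e}. gp e) \<le> (\<Sum>e\<in>{e\<in>Ou. f e < fp e}. g e)"
    and fp_eq: "\<forall>e\<in>Ou. fp e = lp * gp e"
  shows "(\<Sum>e\<in>Ou. sgn (f e - fp e) * (lam * g e - f e))
           \<le> \<bar>lam - lp\<bar> - (\<Sum>e\<in>Ou. \<bar>f e - fp e\<bar>)"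
proof -
  define Jp where "Jp = {e\<in>Ou. fp e < f e}"
  define Jm where "Jm = {e\<in>Ou. f e < fp e}"
  define x where "x e = lam * g e - lp * gp e" for e
  have each: "sgn (f e - fp e) * (lam * g e - f e) =
      ((if fp e < f e then x e else 0) - (if f e < fp e then x e else 0)) - \<bar>f e - fp e\<bar>"
    if "e \<in> Ou" for e
    using fp_eq that unfolding x_def by (auto simp: sgn_if algebra_simps)
  have "(\<Sum>e\<in>Ou. sgn (f e - fp e) * (lam * g e - f e)) =
      (\<Sum>e\<in>Ou. ((if fp e < f e then x e else 0) - (if f e < fp e then x e else 0)) - \<bar>f e - fp e\<bar>)"
    by (rule sum.cong[OF refl each])
  also have "\<dots> = (sum x Jp - sum x Jm) - (\<Sum>e\<in>Ou. \<bar>f e - fp e\<bar>)"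
    unfolding Jp_def Jm_def sum_subtractf sum.inter_filter[OF finO] by simp
  finally have split: "(\<Sum>e\<in>Ou. sgn (f e - fp e) * (lam * g e - f e)) =
      (sum x Jp - sum x Jm) - (\<Sum>e\<in>Ou. \<bar>f e - fp e\<bar>)" .
  define Pp where "Pp = sum gp Jp"
  define Mp where "Mp = sum gp Jm"
  have disj: "Jp \<inter> Jm = {}" and sub: "Jp \<union> Jm \<subseteq> Ou" and fin: "finite Jp" "finite Jm"
    using finO unfolding Jp_def Jm_def by auto
  have "Pp + Mp = sum gp (Jp \<union> Jm)"
    unfolding Pp_def Mp_def by (rule sum.union_disjoint[OF fin disj, symmetric])
  also have "\<dots> \<le> sum gp Ou" by (rule sum_mono2[OF finO sub]) (use gp_nonneg in auto)
  finally have "Pp + Mp \<le> 1" using gp_sum by simp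
  moreover have "Pp \<ge> 0" "Mp \<ge> 0"
    unfolding Pp_def Mp_def using gp_nonneg sub by (auto intro!: sum_nonneg)
  ultimately have PM: "\<bar>Pp - Mp\<bar> \<le> 1" by linarith
  have "sum x Jp - sum x Jm = lam * (sum g Jp - sum g Jm) - lp * (Pp - Mp)"
    unfolding x_def Pp_def Mp_def sum_subtractf sum_distrib_left[symmetric]
    by (simp add: algebra_simps)
  also have "\<dots> \<le> (lam - lp) * (Pp - Mp)"
    using mult_left_mono[OF share_up lam] mult_left_mono[OF share_down lam]
    unfolding Pp_def Mp_def Jp_def Jm_def by (simp add: algebra_simps)
  also have "\<dots> \<le> \<bar>lam - lp\<bar> * \<bar>Pp - Mp\<bar>" by (metis abs_ge_self abs_mult)
  also have "\<dots> \<le> \<bar>lam - lp\<bar>" using PM by (simp add: mult_left_le)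
  finally show ?thesis using split by simp
qed

lemma strict_mono_attains_below_limit:
  fixes m :: "real \<Rightarrow> real" and c :: ereal
  assumes cont: "continuous_on {0..} m" and m0: "m 0 = 0"
    and lim: "((\<lambda>x. ereal (m x)) \<longlongrightarrow> c) at_top"
    and y0: "0 \<le> y" and yc: "ereal y < c"
  shows "y \<in> m ` {0..}"
proof -
  have "eventually (\<lambda>x. ereal y < ereal (m x)) at_top"
    by (rule order_tendstoD(1)[OF lim yc])
  then obtain N where N: "\<And>x. x \<ge> N \<Longrightarrow> y < m x"
    by (auto simp: eventually_at_top_linorder)
  define b where "b = max N 0"
  have "continuous_on {0..b} m" using cont by (rule continuous_on_subset) auto
  then have "\<exists>x. 0 \<le> x \<and> x \<le> b \<and> m x = y"
    using N[of b] m0 y0 by (intro IVT') (auto simp: b_def)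
  then show ?thesis by force
qed

lemma sgn_inverse_gap:
  fixes m :: "real \<Rightarrow> real" and c :: ereal
  assumes cont: "continuous_on {0..} m" and mono: "strict_mono_on {0..} m" and m0: "m 0 = 0"
    and lim: "((\<lambda>x. ereal (m x)) \<longlongrightarrow> c) at_top"
    and y0: "0 \<le> y" and yc: "ereal y < c" and r: "0 \<le> r"
  shows "sgn (r - the_inv_into {0..} m y) = sgn (m r - y)"
proof -
  have inj: "inj_on m {0..}" using mono by (rule strict_mono_on_imp_inj_on)
  have y: "y \<in> m ` {0..}" by (rule strict_mono_attains_below_limit[OF cont m0 lim y0 yc])
  define s where "s = the_inv_into {0..} m y"
  have ms: "m s = y" unfolding s_def by (rule f_the_inv_into_f[OF inj y])
  have s0: "s \<in> {0..}" unfolding s_def by (rule the_inv_into_into[OF inj y]) auto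
  have "sgn (r - s) = sgn (m r - m s)"
    using strict_mono_onD[OF mono _ s0, of r] strict_mono_onD[OF mono s0, of r] r
    by (cases r s rule: linorder_cases) (auto simp: sgn_if)
  then show ?thesis unfolding s_def[symmetric] using ms by simp
qed

lemma dpath_tails_increasing:
  assumes path: "is_dpath E n p" and ord: "\<forall>(u, v)\<in>E. u < v"
    and ij: "i < j" and j: "j < length p"
  shows "fst (p ! i) < fst (p ! j)"
  using ij j
proof (induction j)
  case 0
  then show ?case by simp
next
  case (Suc j)
  have "p ! j \<in> E" using path Suc.prems unfolding is_dpath_def by (auto dest: nth_mem)
  then have "fst (p ! j) < snd (p ! j)" using ord by (cases "p ! j") auto
  also have "\<dots> = fst (p ! Suc j)" using path Suc.prems unfolding is_dpath_def by auto
  finally have step: "fst (p ! j) < fst (p ! Suc j)" .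
  show ?case
  proof (cases "i = j")
    case True
    then show ?thesis using step by simp
  next
    case False
    then show ?thesis using Suc step by simp
  qed
qed

text \<open>Hence every link occurs at one position only, and links can be counted by positions.\<close>

lemma dpath_card_links:
  assumes path: "is_dpath E n p" and ord: "\<forall>(u, v)\<in>E. u < v"
  shows "card {e\<in>set p. Q e} = card {i. i < length p \<and> Q (p ! i)}"
proof -
  have "{e\<in>set p. Q e} = (\<lambda>i. p ! i) ` {i. i < length p \<and> Q (p ! i)}"
    by (force simp: in_set_conv_nth)
  moreover have "inj_on (\<lambda>i. p ! i) {i. i < length p \<and> Q (p ! i)}"
    using dpath_tails_increasing[OF path ord]
    by (intro inj_onI) (metis linorder_neqE_nat mem_Collect_eq order_less_irrefl)
  ultimately show ?thesis by (simp add: card_image)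
qed

lemma dpath_leaves_source_once:
  assumes path: "is_dpath E n p" and ord: "\<forall>(u, v)\<in>E. u < v"
  shows "card {e\<in>set p. fst e = 0} = 1"
proof -
  have ne: "p \<noteq> []" and f0: "fst (p ! 0) = 0"
    using path unfolding is_dpath_def by (auto simp: hd_conv_nth)
  have "i = 0" if "i < length p" "fst (p ! i) = 0" for i
    using dpath_tails_increasing[OF path ord, of 0 i] that f0 by (cases i) auto
  then have "{i. i < length p \<and> fst (p ! i) = 0} = {0}" using ne f0 by auto
  then show ?thesis unfolding dpath_card_links[OF path ord] by simp
qed

lemma dpath_balanced_at_inner_node:
  assumes path: "is_dpath E n p" and ord: "\<forall>(u, v)\<in>E. u < v"
    and v: "0 < v" "v < n"
  shows "card {e\<in>set p. fst e = v} = card {e\<in>set p. snd e = v}"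
proof -
  have f0: "fst (p ! 0) = 0" and last: "snd (p ! (length p - 1)) = n"
    and chain: "\<And>i. Suc i < length p \<Longrightarrow> snd (p ! i) = fst (p ! Suc i)"
    using path unfolding is_dpath_def by (auto simp: hd_conv_nth last_conv_nth)
  \<comment> \<open>The link leaving v at position i+1 is preceded by the link entering v at position i.\<close>
  have "{i. i < length p \<and> fst (p ! i) = v} = Suc ` {i. i < length p \<and> snd (p ! i) = v}"
  proof (intro equalityI subsetI)
    fix i assume i: "i \<in> {i. i < length p \<and> fst (p ! i) = v}"
    then obtain k where "i = Suc k" using f0 v by (cases i) auto
    then show "i \<in> Suc ` {i. i < length p \<and> snd (p ! i) = v}" using chain[of k] i by auto
  next
    fix i assume "i \<in> Suc ` {i. i < length p \<and> snd (p ! i) = v}"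
    then obtain k where k: "i = Suc k" "k < length p" "snd (p ! k) = v" by auto
    moreover have "Suc k < length p"
      using k last v by (metis Suc_lessI diff_Suc_1 less_irrefl)
    ultimately show "i \<in> {i. i < length p \<and> fst (p ! i) = v}" using chain[of k] by auto
  qed
  then show ?thesis unfolding dpath_card_links[OF path ord] by (simp add: card_image)
qed

lemma flow_sum_by_paths:
  assumes "finite A"
  shows "(\<Sum>e\<in>A. flow_of E n \<pi> e) = (\<Sum>p\<in>paths E n. \<pi> p * card {e\<in>A. e \<in> set p})"
proof -
  have "(\<Sum>e\<in>A. flow_of E n \<pi> e) = (\<Sum>p\<in>paths E n. \<Sum>e\<in>A. if e \<in> set p then \<pi> p else 0)"
    unfolding flow_of_def by (rule sum.swap)
  also have "\<dots> = (\<Sum>p\<in>paths E n. \<pi> p * card {e\<in>A. e \<in> set p})"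
    by (rule sum.cong[OF refl]) (simp add: sum.inter_filter[OF assms, symmetric])
  finally show ?thesis .
qed

lemma links_of_path:
  assumes "p \<in> paths E n"
  shows "{e\<in>out_edges E v. e \<in> set p} = {e\<in>set p. fst e = v}"
    and "{e\<in>in_edges E v. e \<in> set p} = {e\<in>set p. snd e = v}"
  using assms unfolding paths_def is_dpath_def out_edges_def in_edges_def by auto

lemma flow_out_of_source:
  assumes finE: "finite E" and ord: "\<forall>(u, v)\<in>E. u < v" and pi: "\<pi> \<in> Pi_set E n C"
  shows "(\<Sum>e\<in>out_edges E 0. flow_of E n \<pi> e) = 1"
proof -
  have "finite (out_edges E 0)" using finE unfolding out_edges_def by simp
  then have "(\<Sum>e\<in>out_edges E 0. flow_of E n \<pi> e) = (\<Sum>p\<in>paths E n. \<pi> p)"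
    using dpath_leaves_source_once[OF _ ord]
    by (simp add: flow_sum_by_paths links_of_path paths_def)
  then show ?thesis using pi unfolding Pi_set_def by simp
qed

lemma flow_conservation:
  assumes finE: "finite E" and ord: "\<forall>(u, v)\<in>E. u < v" and v: "0 < v" "v < n"
  shows "(\<Sum>e\<in>out_edges E v. flow_of E n \<pi> e) = (\<Sum>e\<in>in_edges E v. flow_of E n \<pi> e)"
proof -
  have "finite (out_edges E v)" "finite (in_edges E v)"
    using finE unfolding out_edges_def in_edges_def by simp_all
  then show ?thesis
    using dpath_balanced_at_inner_node[OF _ ord v]
    by (simp add: flow_sum_by_paths links_of_path paths_def)
qed

lemma flow_of_nonneg:
  assumes "\<pi> \<in> Pi_set E n C"
  shows "0 \<le> flow_of E n \<pi> e"
  using assms unfolding Pi_set_def flow_of_def by (auto intro!: sum_nonneg)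

lemma cooperative_partials:
  assumes G_C1: "\<forall>v<n. \<forall>j\<in>out_edges E v. \<forall>e\<in>out_edges E v. \<exists>D.
                   continuous_on (Fv E C v \<times> Pi_set E n C) (\<lambda>(f, p). D f p) \<and>
                   (\<forall>f\<in>Fv E C v. \<forall>p\<in>Pi_set E n C.
                      ((\<lambda>x. G v (f(e := x)) p j) has_real_derivative D f p)
                        (at (f e) within {x. 0 \<le> x \<and> ereal x < C e}))"
    and G_coop: "\<forall>v<n. \<forall>p\<in>Pi_set E n C. \<forall>f\<in>Fv E C v. \<forall>j\<in>out_edges E v. \<forall>e\<in>out_edges E v.
                   j \<noteq> e \<longrightarrow> (\<forall>D. ((\<lambda>x. G v (f(e := x)) p j) has_real_derivative D)
                        (at (f e) within {x. 0 \<le> x \<and> ereal x < C e}) \<longrightarrow> 0 \<le> D)"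
    and v: "v < n" and pi: "\<pi> \<in> Pi_set E n C"
  shows "\<forall>h\<in>Fv E C v. \<forall>j\<in>out_edges E v. \<forall>e\<in>out_edges E v. j \<noteq> e \<longrightarrow>
           (\<exists>D\<ge>0. ((\<lambda>x. G v (h(e := x)) \<pi> j) has_real_derivative D)
                      (at (h e) within {x. 0 \<le> x \<and> ereal x < C e}))"
proof (intro ballI impI)
  fix h j e assume h: "h \<in> Fv E C v" and j: "j \<in> out_edges E v" and e: "e \<in> out_edges E v"
    and je: "j \<noteq> e"
  obtain D where D: "((\<lambda>x. G v (h(e := x)) \<pi> j) has_real_derivative D h \<pi>)
      (at (h e) within {x. 0 \<le> x \<and> ereal x < C e})"
    using G_C1[rule_format, OF v j e] h pi by blast
  moreover have "0 \<le> D h \<pi>" using G_coop[rule_format, OF v pi h j e je] D by blast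
  ultimately show "\<exists>D\<ge>0. ((\<lambda>x. G v (h(e := x)) \<pi> j) has_real_derivative D)
      (at (h e) within {x. 0 \<le> x \<and> ereal x < C e})" by blast
qed

lemma routing_mass_comparison:
  assumes finE: "finite E"
    and simplex: "\<forall>h\<in>Fv E C v. (\<Sum>e\<in>out_edges E v. G v h \<pi> e) = 1"
    and coop: "\<forall>h\<in>Fv E C v. \<forall>j\<in>out_edges E v. \<forall>e\<in>out_edges E v. j \<noteq> e \<longrightarrow>
           (\<exists>D\<ge>0. ((\<lambda>x. G v (h(e := x)) \<pi> j) has_real_derivative D)
                      (at (h e) within {x. 0 \<le> x \<and> ereal x < C e}))"
    and J: "J \<subseteq> out_edges E v" and a: "a \<in> Fv E C v" and b: "b \<in> Fv E C v"
    and up: "\<forall>e\<in>J. a e \<le> b e" and down: "\<forall>e\<in>out_edges E v - J. b e \<le> a e"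
  shows "(\<Sum>j\<in>J. G v b \<pi> j) \<le> (\<Sum>j\<in>J. G v a \<pi> j)"
proof (rule cooperative_mass_antitone[where \<Gamma>="\<lambda>j h. G v h \<pi> j"
      and I="\<lambda>e. {x. 0 \<le> x \<and> ereal x < C e}", OF _ _ _ _ _ J a b up down])
  show "finite (out_edges E v)" using finE unfolding out_edges_def by simp
  show "h \<in> Fv E C v \<longleftrightarrow> (\<forall>e\<in>out_edges E v. h e \<in> {x. 0 \<le> x \<and> ereal x < C e}) \<and>
      (\<forall>e. e \<notin> out_edges E v \<longrightarrow> h e = 0)" for h
    unfolding Fv_def by auto
  show "y \<in> {x. 0 \<le> x \<and> ereal x < C e}"
    if "x \<in> {x. 0 \<le> x \<and> ereal x < C e}" "z \<in> {x. 0 \<le> x \<and> ereal x < C e}" "x \<le> y" "y \<le> z"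
    for e x y z
    using that by (auto intro: le_less_trans[of "ereal y" "ereal z"])
qed (use simplex coop in auto)

text \<open>
  Here the reference outflow is fp = lp * G^v(fp) by consistency, with lp the reference
  inflow (1 at the source), and the shares compare by routing_mass_comparison.
\<close>

lemma node_drift_bound:
  fixes E :: "(nat \<times> nat) set" and n :: nat and \<pi> :: "(nat \<times> nat) list \<Rightarrow> real"
    and f :: "nat \<times> nat \<Rightarrow> real"
  defines "fp \<equiv> flow_of E n \<pi>"
  assumes finE: "finite E"
    and simplex: "\<forall>h\<in>Fv E C v.
       (\<forall>e\<in>out_edges E v. 0 \<le> G v h \<pi> e) \<and> (\<Sum>e\<in>out_edges E v. G v h \<pi> e) = 1"
    and coop: "\<forall>h\<in>Fv E C v. \<forall>j\<in>out_edges E v. \<forall>e\<in>out_edges E v. j \<noteq> e \<longrightarrow>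
           (\<exists>D\<ge>0. ((\<lambda>x. G v (h(e := x)) \<pi> j) has_real_derivative D)
                      (at (h e) within {x. 0 \<le> x \<and> ereal x < C e}))"
    and consistent: "\<forall>e\<in>out_edges E v. (\<Sum>j\<in>out_edges E v. fp j) * G v (restr E v fp) \<pi> e = fp e"
    and f: "f \<in> Fall E C" and pi: "\<pi> \<in> Pi_set E n C"
    and inflow: "(\<Sum>e\<in>out_edges E v. fp e) = (if v = 0 then 1 else \<Sum>e\<in>in_edges E v. fp e)"
  shows "(\<Sum>e\<in>out_edges E v. sgn (f e - fp e) * Hfun E G f \<pi> e)
           \<le> (if v = 0 then 0 else \<Sum>e\<in>in_edges E v. \<bar>f e - fp e\<bar>)
              - (\<Sum>e\<in>out_edges E v. \<bar>f e - fp e\<bar>)"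
proof -
  define Ou where "Ou = out_edges E v"
  define lam where "lam = (if v = 0 then 1 else \<Sum>j\<in>in_edges E v. f j)"
  define lp where "lp = (if v = 0 then 1 else \<Sum>j\<in>in_edges E v. fp j)"
  define g where "g e = G v (restr E v f) \<pi> e" for e
  define gp where "gp e = G v (restr E v fp) \<pi> e" for e
  have finO: "finite Ou" using finE unfolding Ou_def out_edges_def by simp
  have restr_Ou: "restr E v h e = h e" if "e \<in> Ou" for h e
    using that unfolding restr_def Ou_def by simp
  have a: "restr E v f \<in> Fv E C v" and b: "restr E v fp \<in> Fv E C v"
    using f pi flow_of_nonneg[OF pi]
    unfolding Fall_def Fv_def Pi_set_def restr_def out_edges_def fp_def by auto
  have share_up: "(\<Sum>e\<in>{e\<in>Ou. fp e < f e}. g e) \<le> (\<Sum>e\<in>{e\<in>Ou. fp e < f e}. gp e)"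
    unfolding g_def gp_def
    by (rule routing_mass_comparison[where G=G and v=v and \<pi>=\<pi>, OF finE _ coop _ b a])
       (use simplex in \<open>auto simp: restr_Ou Ou_def\<close>)
  have share_down: "(\<Sum>e\<in>{e\<in>Ou. f e < fp e}. gp e) \<le> (\<Sum>e\<in>{e\<in>Ou. f e < fp e}. g e)"
    unfolding g_def gp_def
    by (rule routing_mass_comparison[where G=G and v=v and \<pi>=\<pi>, OF finE _ coop _ a b])
       (use simplex in \<open>auto simp: restr_Ou Ou_def\<close>)
  have gp_simplex: "\<forall>e\<in>Ou. 0 \<le> gp e" "sum gp Ou = 1"
    using simplex b unfolding gp_def Ou_def by auto
  have fp_eq: "\<forall>e\<in>Ou. fp e = lp * gp e"
  proof
    fix e assume "e \<in> Ou"
    then have "(\<Sum>j\<in>Ou. fp j) * gp e = fp e"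
      using consistent unfolding gp_def Ou_def by blast
    moreover have "(\<Sum>j\<in>Ou. fp j) = lp" using inflow unfolding Ou_def lp_def by simp
    ultimately show "fp e = lp * gp e" by simp
  qed
  have lam: "lam \<ge> 0"
    using f unfolding lam_def Fall_def in_edges_def by (auto intro!: sum_nonneg)
  have "(\<Sum>e\<in>Ou. sgn (f e - fp e) * Hfun E G f \<pi> e)
      = (\<Sum>e\<in>Ou. sgn (f e - fp e) * (lam * g e - f e))"
    unfolding Hfun_def lam_def g_def Ou_def out_edges_def by (auto simp: Let_def)
  also have "\<dots> \<le> \<bar>lam - lp\<bar> - (\<Sum>e\<in>Ou. \<bar>f e - fp e\<bar>)"
    by (rule node_sign_inequality[OF finO lam gp_simplex share_up share_down fp_eq])
  also have "\<bar>lam - lp\<bar> \<le> (if v = 0 then 0 else \<Sum>e\<in>in_edges E v. \<bar>f e - fp e\<bar>)"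
    unfolding lam_def lp_def by (auto simp: sum_subtractf[symmetric] intro: sum_abs)
  finally show ?thesis unfolding Ou_def by simp
qed

lemma sum_by_tail:
  assumes finE: "finite E" and tails: "\<forall>e\<in>E. fst e < n"
  shows "(\<Sum>e\<in>E. h e) = (\<Sum>v<n. \<Sum>e\<in>out_edges E v. h e)"
proof -
  have "fst ` E \<subseteq> {..<n}" using tails by auto
  from sum.group[OF finE finite_lessThan this, of h] show ?thesis
    unfolding out_edges_def by simp
qed

text \<open>
  Discounted telescoping: charging each link e to the inflow mismatch of its head, weighted
  by alpha^head, costs at most alpha^(tail e + 1) since the head exceeds the tail.
\<close>

lemma discounted_inflow_bound:
  fixes d :: "nat \<times> nat \<Rightarrow> real" and \<alpha> :: real
  assumes finE: "finite E" and links: "\<forall>e\<in>E. fst e < snd e \<and> snd e \<le> n"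
    and \<alpha>: "0 \<le> \<alpha>" "\<alpha> \<le> 1" and d: "\<forall>e\<in>E. 0 \<le> d e"
  shows "(\<Sum>v<n. \<alpha> ^ v * (if v = 0 then 0 else \<Sum>e\<in>in_edges E v. d e))
           \<le> \<alpha> * (\<Sum>e\<in>E. \<alpha> ^ fst e * d e)"
proof -
  define c where "c v = (\<Sum>e\<in>in_edges E v. \<alpha> ^ (fst e + 1) * d e)" for v
  have c_nonneg: "0 \<le> c v" for v
    using \<alpha> d unfolding c_def in_edges_def by (auto intro!: sum_nonneg)
  have "\<alpha> ^ v * (if v = 0 then 0 else \<Sum>e\<in>in_edges E v. d e) \<le> c v" for v
  proof (cases "v = 0")
    case True
    then show ?thesis using c_nonneg by simp
  next
    case False
    have "\<alpha> ^ v * d e \<le> \<alpha> ^ (fst e + 1) * d e" if "e \<in> in_edges E v" for e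
      using that links d \<alpha> unfolding in_edges_def
      by (intro mult_right_mono power_decreasing) auto
    then show ?thesis
      using False unfolding c_def by (simp add: sum_distrib_left sum_mono)
  qed
  then have "(\<Sum>v<n. \<alpha> ^ v * (if v = 0 then 0 else \<Sum>e\<in>in_edges E v. d e)) \<le> (\<Sum>v<n. c v)"
    by (rule sum_mono)
  also have "\<dots> \<le> (\<Sum>v\<le>n. c v)" by (rule sum_mono2) (use c_nonneg in auto)
  also have "\<dots> = (\<Sum>e\<in>E. \<alpha> ^ (fst e + 1) * d e)"
  proof -
    have "snd ` E \<subseteq> {..n}" using links by auto
    from sum.group[OF finE finite_atMost this, of "\<lambda>e. \<alpha> ^ (fst e + 1) * d e"] show ?thesis
      unfolding c_def in_edges_def by simp
  qed
  also have "\<dots> = \<alpha> * (\<Sum>e\<in>E. \<alpha> ^ fst e * d e)" by (simp add: sum_distrib_left algebra_simps)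
  finally show ?thesis .
qed

lemma discounted_drift_bound:
  fixes d :: "nat \<times> nat \<Rightarrow> real" and X :: "nat \<Rightarrow> real" and \<alpha> :: real
  assumes finE: "finite E" and links: "\<forall>e\<in>E. fst e < snd e \<and> snd e \<le> n"
    and \<alpha>: "0 \<le> \<alpha>" "\<alpha> \<le> 1" and d: "\<forall>e\<in>E. 0 \<le> d e"
    and node: "\<And>v. v < n \<Longrightarrow>
       X v \<le> (if v = 0 then 0 else \<Sum>e\<in>in_edges E v. d e) - (\<Sum>e\<in>out_edges E v. d e)"
  shows "(\<Sum>v<n. \<alpha> ^ v * X v) \<le> - (1 - \<alpha>) * (\<Sum>e\<in>E. \<alpha> ^ fst e * d e)"
proof -
  have tails: "\<forall>e\<in>E. fst e < n" using links by fastforce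
  have "(\<Sum>v<n. \<alpha> ^ v * X v) \<le> (\<Sum>v<n. \<alpha> ^ v *
      ((if v = 0 then 0 else \<Sum>e\<in>in_edges E v. d e) - (\<Sum>e\<in>out_edges E v. d e)))"
    using node \<alpha> by (intro sum_mono mult_left_mono) auto
  also have "\<dots> = (\<Sum>v<n. \<alpha> ^ v * (if v = 0 then 0 else \<Sum>e\<in>in_edges E v. d e))
      - (\<Sum>e\<in>E. \<alpha> ^ fst e * d e)"
    unfolding sum_by_tail[OF finE tails] right_diff_distrib sum_subtractf sum_distrib_left
    by (intro arg_cong2[where f=minus] sum.cong refl) (auto simp: out_edges_def)
  also have "\<dots> \<le> - (1 - \<alpha>) * (\<Sum>e\<in>E. \<alpha> ^ fst e * d e)"
    using discounted_inflow_bound[OF finE links \<alpha> d] by (simp add: algebra_simps)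
  finally show ?thesis .
qed

lemma sigma_eq_flow_sign:
  assumes C1: "\<exists>d. continuous_on {0..} d \<and>
                   (\<forall>x\<ge>0. (\<mu> e has_real_derivative d x) (at x within {0..}))"
    and mono: "strict_mono_on {0..} (\<mu> e)"
    and zero: "\<mu> e 0 = 0" and lim: "((\<lambda>x. ereal (\<mu> e x)) \<longlongrightarrow> C e) at_top"
    and pi: "\<pi> \<in> Pi_set E n C" and e: "e \<in> E" and rho: "0 \<le> \<rho> e"
  shows "sigma E n \<mu> \<rho> \<pi> e = sgn (\<mu> e (\<rho> e) - flow_of E n \<pi> e)"
proof -
  have cont: "continuous_on {0..} (\<mu> e)"
    using C1 by (auto simp: continuous_on_eq_continuous_within intro: DERIV_continuous)
  have "ereal (flow_of E n \<pi> e) < C e" using pi e unfolding Pi_set_def by auto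
  then show ?thesis
    using sgn_inverse_gap[OF cont mono zero lim flow_of_nonneg[OF pi] _ rho]
    unfolding sigma_def rho_pi_def by simp
qed

theorem lemma3:
  fixes n :: nat and E :: "(nat \<times> nat) set"
    and \<mu> :: "nat \<times> nat \<Rightarrow> real \<Rightarrow> real" and C :: "nat \<times> nat \<Rightarrow> ereal"
    and G :: "nat \<Rightarrow> (nat \<times> nat \<Rightarrow> real) \<Rightarrow> ((nat \<times> nat) list \<Rightarrow> real) \<Rightarrow> nat \<times> nat \<Rightarrow> real"
    and \<alpha> :: real and \<rho> :: "nat \<times> nat \<Rightarrow> real" and \<pi> :: "(nat \<times> nat) list \<Rightarrow> real"
  assumes E_sub: "E \<subseteq> {0..n} \<times> {0..n}"
    and E_ord: "\<forall>(u, v)\<in>E. u < v"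
    and E_acyclic: "acyclic E"
    and source: "\<forall>v\<in>{0..n}. in_edges E v = {} \<longleftrightarrow> v = 0"
    and sink: "\<forall>v\<in>{0..n}. out_edges E v = {} \<longleftrightarrow> v = n"
    and reach: "\<forall>v\<in>{0..n}. (v, n) \<in> E\<^sup>*"
    and mu_C1: "\<forall>e\<in>E. \<exists>d. continuous_on {0..} d \<and>
                   (\<forall>x\<ge>0. (\<mu> e has_real_derivative d x) (at x within {0..}))"
    and mu_incr: "\<forall>e\<in>E. strict_mono_on {0..} (\<mu> e)"
    and mu_concave: "\<forall>e\<in>E. \<forall>x\<ge>0. \<forall>y\<ge>0. x \<noteq> y \<longrightarrow> (\<forall>t. 0 < t \<and> t < 1 \<longrightarrow>
                   t * \<mu> e x + (1 - t) * \<mu> e y < \<mu> e (t * x + (1 - t) * y))"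
    and mu_zero: "\<forall>e\<in>E. \<mu> e 0 = 0"
    and C_lim: "\<forall>e\<in>E. ((\<lambda>x. ereal (\<mu> e x)) \<longlongrightarrow> C e) at_top"
    and G_simplex: "\<forall>v<n. \<forall>f\<in>Fv E C v. \<forall>p\<in>Pi_set E n C.
                   (\<forall>e\<in>out_edges E v. 0 \<le> G v f p e) \<and> (\<Sum>e\<in>out_edges E v. G v f p e) = 1"
    and G_cont: "\<forall>v<n. \<forall>j\<in>out_edges E v.
                   continuous_on (Fv E C v \<times> Pi_set E n C) (\<lambda>(f, p). G v f p j)"
    and G_C1: "\<forall>v<n. \<forall>j\<in>out_edges E v. \<forall>e\<in>out_edges E v. \<exists>D.
                   continuous_on (Fv E C v \<times> Pi_set E n C) (\<lambda>(f, p). D f p) \<and>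
                   (\<forall>f\<in>Fv E C v. \<forall>p\<in>Pi_set E n C.
                      ((\<lambda>x. G v (f(e := x)) p j) has_real_derivative D f p)
                        (at (f e) within {x. 0 \<le> x \<and> ereal x < C e}))"
    and G_consistent: "\<forall>v<n. \<forall>p\<in>Pi_set E n C. \<forall>e\<in>out_edges E v.
                   (\<Sum>j\<in>out_edges E v. flow_of E n p j) * G v (restr E v (flow_of E n p)) p e
                     = flow_of E n p e"
    and G_coop: "\<forall>v<n. \<forall>p\<in>Pi_set E n C. \<forall>f\<in>Fv E C v. \<forall>j\<in>out_edges E v. \<forall>e\<in>out_edges E v.
                   j \<noteq> e \<longrightarrow> (\<forall>D. ((\<lambda>x. G v (f(e := x)) p j) has_real_derivative D)
                        (at (f e) within {x. 0 \<le> x \<and> ereal x < C e}) \<longrightarrow> 0 \<le> D)"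
    and alpha: "0 < \<alpha>" "\<alpha> < 1"
    and rho_nonneg: "\<forall>e\<in>E. 0 \<le> \<rho> e"
    and f_in: "(\<lambda>e. \<mu> e (\<rho> e)) \<in> Fall E C"
    and pi_in: "\<pi> \<in> Pi_set E n C"
  shows "(\<Sum>e\<in>E. Wgrad \<alpha> E n \<mu> \<rho> \<pi> e * Hfun E G (\<lambda>e. \<mu> e (\<rho> e)) \<pi> e)
           = (\<Sum>v<n. \<alpha> ^ v * (\<Sum>e\<in>out_edges E v.
                 sigma E n \<mu> \<rho> \<pi> e * Hfun E G (\<lambda>e. \<mu> e (\<rho> e)) \<pi> e))
       \<and> (\<Sum>v<n. \<alpha> ^ v * (\<Sum>e\<in>out_edges E v.
                 sigma E n \<mu> \<rho> \<pi> e * Hfun E G (\<lambda>e. \<mu> e (\<rho> e)) \<pi> e))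
           \<le> - (1 - \<alpha>) * Vfun \<alpha> E n (\<lambda>e. \<mu> e (\<rho> e)) \<pi>"
proof -
  define f where "f = (\<lambda>e. \<mu> e (\<rho> e))"
  define fp where "fp = flow_of E n \<pi>"
  define d where "d e = \<bar>f e - fp e\<bar>" for e
  define H where "H = Hfun E G f \<pi>"
  have finE: "finite E" using E_sub by (rule finite_subset) auto
  have links: "\<forall>e\<in>E. fst e < snd e \<and> snd e \<le> n" using E_sub E_ord by auto
  then have tails: "\<forall>e\<in>E. fst e < n" by fastforce
  have sigma_eq: "sigma E n \<mu> \<rho> \<pi> e = sgn (f e - fp e)" if "e \<in> E" for e
    unfolding f_def fp_def using that mu_C1 mu_incr mu_zero C_lim rho_nonneg
    by (intro sigma_eq_flow_sign[where \<mu>=\<mu> and e=e, OF _ _ _ _ pi_in]) auto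
  have drift_eq: "(\<Sum>e\<in>E. Wgrad \<alpha> E n \<mu> \<rho> \<pi> e * H e)
      = (\<Sum>v<n. \<alpha> ^ v * (\<Sum>e\<in>out_edges E v. sigma E n \<mu> \<rho> \<pi> e * H e))"
    unfolding sum_by_tail[OF finE tails] sum_distrib_left
    by (intro sum.cong refl) (auto simp: Wgrad_def sigma_def out_edges_def mult.assoc)
  have node: "(\<Sum>e\<in>out_edges E v. sigma E n \<mu> \<rho> \<pi> e * H e)
      \<le> (if v = 0 then 0 else \<Sum>e\<in>in_edges E v. d e) - (\<Sum>e\<in>out_edges E v. d e)"
    if v: "v < n" for v
  proof -
    have "(\<Sum>e\<in>out_edges E v. fp e) = (if v = 0 then 1 else \<Sum>e\<in>in_edges E v. fp e)"
      using flow_out_of_source[OF finE E_ord pi_in] flow_conservation[OF finE E_ord _ v]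
      unfolding fp_def by simp
    from node_drift_bound[where G=G and v=v and \<pi>=\<pi>,
        OF finE _ cooperative_partials[OF G_C1 G_coop v pi_in] _ _ pi_in,
        folded fp_def, OF _ _ f_in[folded f_def] this]
    show ?thesis
      using G_simplex G_consistent v pi_in sigma_eq
      unfolding H_def d_def fp_def out_edges_def by simp
  qed
  have "(\<Sum>v<n. \<alpha> ^ v * (\<Sum>e\<in>out_edges E v. sigma E n \<mu> \<rho> \<pi> e * H e))
      \<le> - (1 - \<alpha>) * (\<Sum>e\<in>E. \<alpha> ^ fst e * d e)"
    using discounted_drift_bound[OF finE links _ _ _ node] alpha by (simp add: d_def)
  moreover have "Vfun \<alpha> E n f \<pi> = (\<Sum>e\<in>E. \<alpha> ^ fst e * d e)"
    unfolding sum_by_tail[OF finE tails] Vfun_def sum_distrib_left d_def fp_def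
    by (intro sum.cong refl) (auto simp: out_edges_def)
  ultimately show ?thesis using drift_eq unfolding f_def H_def by simp
qed

end
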